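(* (i) Let $a,b,c\in\mathbb{R}$ be such that $$B=\begin{pmatrix}1&a&b\\ a&1&c\\ b&c&1\end{pmatrix}$$ is positive semidefinite. Then $$\big|\,|a|-|b|\,\big|\le\sqrt{1-|c|^2}\le\sqrt2\,\sqrt{1-|c|},$$ and for every real $k\ge2$, $$\big|\,|a|^k-|b|^k\,\big|\le\sqrt{1-|c|^k}.$$ (ii) If $0\le\alpha,\beta,\gamma\le\pi/2$ and $|\alpha-\beta|\le\gamma\le\alpha+\beta$, then for every integer $k\ge1$, $$|\cos^k\alpha-\cos^k\beta|\le\sqrt{k}\,\sin\gamma.$$ *)

theory Defs
  imports "HOL-Analysis.Analysis"
begin

definition psd_matrix :: "real^'n^'n \<Rightarrow> bool" where
  "psd_matrix A \<longleftrightarrow> transpose A = A \<and> (\<forall>x. 0 \<le> x \<bullet> (A *v x))"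

definition Bmat :: "real \<Rightarrow> real \<Rightarrow> real \<Rightarrow> real^3^3" where
  "Bmat a b c = vector [vector [1, a, b], vector [a, 1, c], vector [b, c, 1]]"

end

theory Submission
  imports Defs
begin

(* Both parts reduce to one inequality about "Gram triples": if
   x, y, z \<in> [0,1] and x^2 + y^2 + z^2 \<le> 1 + 2xyz, then |x - y| \<le> sqrt (1 - z^2)
   and |x^k - y^k| \<le> sqrt (1 - z^k) for every real k \<ge> 2.
   Geometrically x = cos A, y = cos (A + D) and z \<le> cos D.  For k = 2p the key
   fact is that the p-th power map (p \<ge> 1) preserves such configurations:
   x^p, v^p, y^p again satisfy y^p \<ge> cos (A' + D') with x^p = cos A', v^p = cos D'.
   This follows from the convexity of t \<mapsto> t^p (tangent line bound).  Then
   cos^2 A' - cos^2 (A' + D') = sin D' sin (2A' + D') \<le> sin D' finishes the bound. *)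

section \<open>Convexity estimates for real powers\<close>

lemma powr_above_tangent:
  fixes p s t :: real
  assumes p: "p \<ge> 1" and s: "s \<ge> 0" and t: "t \<ge> 0"
  shows "s powr p + p * s powr (p - 1) * (t - s) \<le> t powr p"
proof (cases "s = 0")
  case True
  then show ?thesis using t by simp
next
  case False
  then have "s > 0" using s by simp
  show ?thesis
  proof (cases "t = 0")
    case True
    have "s powr p = s powr (p - 1) * s" using \<open>s > 0\<close> by (simp add: powr_diff)
    then have "s powr p + p * s powr (p - 1) * (t - s) = (1 - p) * s powr p"
      using True by (simp add: algebra_simps)
    also have "\<dots> \<le> 0" using p by (simp add: mult_nonpos_nonneg)
    finally show ?thesis using True by simp
  next
    case False
    then have "t > 0" using t by simp
    with \<open>s > 0\<close> have "p * s powr (p - 1) * (t - s) \<le> t powr p - s powr p"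
      by (intro convex_on_imp_above_tangent[where A = "{0<..}"] powr_convex p)
         (auto intro!: derivative_eq_intros simp: interior_open)
    then show ?thesis by simp
  qed
qed

lemma square_powr: "(u::real) \<ge> 0 \<Longrightarrow> (u powr q)^2 = (u^2) powr q"
  by (simp add: power2_eq_square powr_mult)

text \<open>With u = cos A: p (cos^(p-1) A sin A)^2 \<le> 1 - cos^(2p) A, the tangent bound at
  u^2 evaluated at 1.  It controls the first-order term in the next lemma.\<close>
lemma powr_sine_factor_le:
  fixes u p :: real
  assumes u: "0 \<le> u" "u \<le> 1" and p: "p \<ge> 1"
  shows "p * (u powr (p - 1) * sqrt (1 - u^2))^2 \<le> 1 - (u powr p)^2"
proof -
  define C where "C = u^2"
  have C: "0 \<le> C" "C \<le> 1" using u by (auto simp: C_def power_le_one)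
  have "C powr p + p * C powr (p - 1) * (1 - C) \<le> 1"
    using powr_above_tangent[OF p C(1), of 1] by simp
  moreover have "(u powr (p - 1) * sqrt (1 - u^2))^2 = C powr (p - 1) * (1 - C)"
    using u C by (simp add: power_mult_distrib square_powr C_def)
  moreover have "(u powr p)^2 = C powr p" using u by (simp add: square_powr C_def)
  ultimately show ?thesis by (simp add: mult.assoc)
qed

text \<open>The p-th power map preserves lower bounds of the form cos (A + D):
  if u = cos A, v = cos D and cos (A + D) \<ge> 0, then
  cos (A' + D') \<le> cos (A + D)^p where u^p = cos A', v^p = cos D'.\<close>
lemma powr_preserves_cos_sum_bound:
  fixes u v p :: real
  assumes u: "0 \<le> u" "u \<le> 1" and v: "0 \<le> v" "v \<le> 1" and p: "p \<ge> 1"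
    and nonneg: "0 \<le> u * v - sqrt (1 - u^2) * sqrt (1 - v^2)"
  shows "u powr p * v powr p - sqrt ((1 - (u powr p)^2) * (1 - (v powr p)^2))
         \<le> (u * v - sqrt (1 - u^2) * sqrt (1 - v^2)) powr p"
proof -
  define A where "A = u * v"
  define B where "B = sqrt (1 - u^2) * sqrt (1 - v^2)"
  define P where "P = u powr (p - 1) * sqrt (1 - u^2)"
  define R where "R = v powr (p - 1) * sqrt (1 - v^2)"
  have "A \<ge> 0" using u v by (simp add: A_def)
  then have "A powr p - p * A powr (p - 1) * B \<le> (A - B) powr p"
    using powr_above_tangent[OF p _, of A "A - B"] nonneg
    by (simp add: A_def B_def algebra_simps)
  moreover have "A powr p = u powr p * v powr p" using u v by (simp add: A_def powr_mult)
  moreover have "p * A powr (p - 1) * B = p * P * R"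
    using u v by (simp add: A_def B_def P_def R_def powr_mult)
  moreover have "p * P * R \<le> sqrt ((1 - (u powr p)^2) * (1 - (v powr p)^2))"
  proof (rule real_le_rsqrt)
    have "(p * P * R)^2 = (p * P^2) * (p * R^2)" by (simp add: power2_eq_square)
    also have "\<dots> \<le> (1 - (u powr p)^2) * (1 - (v powr p)^2)"
    proof (rule mult_mono)
      show "p * P^2 \<le> 1 - (u powr p)^2" "p * R^2 \<le> 1 - (v powr p)^2"
        using powr_sine_factor_le[OF u p] powr_sine_factor_le[OF v p] by (simp_all add: P_def R_def)
      moreover have "0 \<le> p * P^2" "0 \<le> p * R^2" using p by simp_all
      ultimately show "0 \<le> 1 - (u powr p)^2" "0 \<le> p * R^2" by linarith+
    qed
    finally show "(p * P * R)^2 \<le> (1 - (u powr p)^2) * (1 - (v powr p)^2)" .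
  qed
  ultimately show ?thesis unfolding A_def B_def by linarith
qed

section \<open>A trigonometric estimate in algebraic form\<close>

lemma unit_circle_le_one:
  fixes u w :: real
  assumes "u^2 + w^2 = 1"
  shows "u \<le> 1"
proof -
  have "u^2 \<le> 1" using assms zero_le_power2[of w] by linarith
  then have "\<bar>u\<bar> \<le> 1" by (simp add: abs_square_le_1)
  then show ?thesis by linarith
qed

text \<open>With X = cos A, V = cos D (X', V' the sines) and cos (A + D) \<le> Y \<le> cos A:
  X^2 - Y^2 \<le> cos^2 A - cos^2 (A + D) = sin D sin (2A + D) \<le> sin D.\<close>
lemma cos_sq_difference_le_sin:
  fixes X X' V V' Y :: real
  assumes nonneg: "X \<ge> 0" "X' \<ge> 0" "V \<ge> 0" "V' \<ge> 0"
    and pyth: "X^2 + X'^2 = 1" "V^2 + V'^2 = 1"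
    and Y: "0 \<le> Y" "Y \<le> X" "X * V - X' * V' \<le> Y"
  shows "X^2 - Y^2 \<le> V'"
proof (cases "X * V - X' * V' \<ge> 0")
  case True
  define W where "W = X * V - X' * V'"
  define S where "S = V' * (X^2 - X'^2) + 2 * X * X' * V"
  have "W^2 \<le> Y^2" using True Y unfolding W_def by (intro power_mono) auto
  moreover have "X^2 - W^2 = V' * S"
    unfolding W_def S_def using pyth by algebra
  moreover have "S \<le> 1"
    \<comment> \<open>S = sin (2A + D), bounded by Cauchy-Schwarz\<close>
  proof -
    have "(X^2 - X'^2)^2 + (2 * X * X')^2 = 1" using pyth(1) by algebra
    moreover have "(V' - (X^2 - X'^2))^2 + (V - 2 * X * X')^2
                   = (V^2 + V'^2) + ((X^2 - X'^2)^2 + (2 * X * X')^2) - 2 * S"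
      unfolding S_def by algebra
    ultimately show ?thesis
      using pyth(2) zero_le_power2[of "V' - (X^2 - X'^2)"] zero_le_power2[of "V - 2 * X * X'"]
      by linarith
  qed
  then have "V' * S \<le> V'" using nonneg(4) by (simp add: mult_left_le)
  ultimately show ?thesis by linarith
next
  case False
  then have "(X * V)^2 \<le> (X' * V')^2" using nonneg by (intro power_mono) auto
  moreover have "(X' * V')^2 = (X * V)^2 + 1 - X^2 - V^2" using pyth by algebra
  ultimately have "X^2 \<le> V'^2" using pyth(2) by linarith
  moreover have "V' \<le> 1" using pyth(2) by (intro unit_circle_le_one[of V' V]) simp
  then have "V'^2 \<le> V'" using nonneg(4) by (simp add: power2_eq_square mult_left_le)
  ultimately show ?thesis using zero_le_power2[of Y] by linarith
qed

section \<open>The Gram-triple inequality\<close>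

text \<open>The Gram condition for the unit vectors with pairwise inner products x, y, z.\<close>
definition gram_triple :: "real \<Rightarrow> real \<Rightarrow> real \<Rightarrow> bool" where
  "gram_triple x y z \<longleftrightarrow> 0 \<le> x \<and> x \<le> 1 \<and> 0 \<le> y \<and> y \<le> 1 \<and> 0 \<le> z \<and> z \<le> 1
     \<and> x^2 + y^2 + z^2 \<le> 1 + 2 * x * y * z"

lemma gram_triple_swap: "gram_triple x y z \<Longrightarrow> gram_triple y x z"
  by (simp add: gram_triple_def algebra_simps)

text \<open>The case k = 1: (x - y)^2 = x^2 + y^2 - 2xy \<le> 1 - z^2 since xy(1 - z) \<ge> 0.\<close>
lemma gram_triple_difference_le:
  assumes "gram_triple x y z"
  shows "\<bar>x - y\<bar> \<le> sqrt (1 - z^2)"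
proof (rule real_le_rsqrt)
  have "0 \<le> x * y * (1 - z)" using assms by (simp add: gram_triple_def)
  then show "\<bar>x - y\<bar>^2 \<le> 1 - z^2"
    using assms by (simp add: gram_triple_def power2_eq_square algebra_simps)
qed

text \<open>Angle parametrisation: writing x = cos A, y = cos B with 0 \<le> A \<le> B, the
  number v = cos (B - A) satisfies z \<le> v and y = cos (A + (B - A)).\<close>
lemma gram_triple_angle_difference:
  assumes "gram_triple x y z" and "y \<le> x"
  obtains v where "0 \<le> v" "v \<le> 1" "z \<le> v"
    and "y = x * v - sqrt (1 - x^2) * sqrt (1 - v^2)"
proof -
  from assms have x: "0 \<le> x" "x \<le> 1" and y: "0 \<le> y"
    and con: "x^2 + y^2 + z^2 \<le> 1 + 2 * x * y * z"
    by (auto simp: gram_triple_def)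
  have xx1: "x^2 \<le> 1" using x by (simp add: power_le_one)
  have yyx: "y^2 \<le> x^2" using y \<open>y \<le> x\<close> by (intro power_mono) auto
  define x' where "x' = sqrt (1 - x^2)"
  define y' where "y' = sqrt (1 - y^2)"
  have x'2: "x'^2 = 1 - x^2" and y'2: "y'^2 = 1 - y^2" and x'y': "0 \<le> x'" "x' \<le> y'"
    using xx1 yyx by (auto simp: x'_def y'_def)
  define v where "v = x * y + x' * y'"
  define v' where "v' = x * y' - x' * y"
  have "x' * y \<le> y' * x" using x'y' \<open>y \<le> x\<close> y by (intro mult_mono) auto
  then have v'0: "v' \<ge> 0" by (simp add: v'_def mult.commute)
  have pyth: "v^2 + v'^2 = 1"
    using x'2 y'2 unfolding v_def v'_def by algebra
  have v0: "0 \<le> v" using x y x'y' by (simp add: v_def)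
  have v1: "v \<le> 1" using pyth by (rule unit_circle_le_one)
  have "1 - v^2 = v'^2" using pyth by simp
  then have "sqrt (1 - v^2) = v'" using v'0 by simp
  moreover have "y = x * v - x' * v'"
    using x'2 unfolding v_def v'_def by algebra
  ultimately have y_eq: "y = x * v - sqrt (1 - x^2) * sqrt (1 - v^2)"
    by (simp add: x'_def)
  have "(z - x * y)^2 = z^2 - 2 * x * y * z + x^2 * y^2" by algebra
  moreover have "(x' * y')^2 = 1 - x^2 - y^2 + x^2 * y^2"
    unfolding power_mult_distrib x'2 y'2 by algebra
  ultimately have "(z - x * y)^2 \<le> (x' * y')^2" using con by linarith
  moreover have "0 \<le> x' * y'" using x'y' by simp
  ultimately have "z - x * y \<le> x' * y'" by (rule power2_le_imp_le)
  then have "z \<le> v" by (simp add: v_def)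
  from v0 v1 this y_eq show ?thesis by (rule that)
qed

text \<open>Main inequality for ordered Gram triples, with k = 2p: apply the power map
  to (x, v, y) and then the trigonometric estimate.\<close>
lemma gram_triple_ordered_powr_difference_le:
  fixes k :: real
  assumes gram: "gram_triple x y z" and "y \<le> x" and k: "k \<ge> 2"
  shows "x powr k - y powr k \<le> sqrt (1 - z powr k)"
proof -
  obtain v where v: "0 \<le> v" "v \<le> 1" "z \<le> v"
    and y_eq: "y = x * v - sqrt (1 - x^2) * sqrt (1 - v^2)"
    using gram_triple_angle_difference[OF gram \<open>y \<le> x\<close>] by blast
  from gram have x: "0 \<le> x" "x \<le> 1" and y: "0 \<le> y" and z: "0 \<le> z"
    by (auto simp: gram_triple_def)
  define p where "p = k / 2"
  have p: "p \<ge> 1" and kp: "k = p + p" using k by (simp_all add: p_def)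
  have sq_powr: "(t powr p)^2 = t powr k" for t :: real
    unfolding kp power2_eq_square by (rule powr_add[symmetric])
  define X where "X = x powr p"
  define V where "V = v powr p"
  define Y where "Y = y powr p"
  have X: "0 \<le> X" "X \<le> 1" and V: "0 \<le> V" "V \<le> 1"
    using x v p by (simp_all add: X_def V_def powr_le1)
  have Y: "0 \<le> Y" "Y \<le> X"
    unfolding X_def Y_def using y \<open>y \<le> x\<close> p by (simp_all add: powr_mono2)
  have XV: "X^2 \<le> 1" "V^2 \<le> 1" using X V by (simp_all add: power_le_one)
  have cos_sum: "X * V - sqrt ((1 - X^2) * (1 - V^2)) \<le> Y"
    using powr_preserves_cos_sum_bound[OF x v(1,2) p] y y_eq
    by (simp add: X_def V_def Y_def)
  have "X^2 - Y^2 \<le> sqrt (1 - V^2)"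
  proof (rule cos_sq_difference_le_sin[where X' = "sqrt (1 - X^2)"])
    show "X^2 + (sqrt (1 - X^2))^2 = 1" "V^2 + (sqrt (1 - V^2))^2 = 1" using XV by simp_all
    show "X * V - sqrt (1 - X^2) * sqrt (1 - V^2) \<le> Y" using cos_sum by (simp add: real_sqrt_mult)
  qed (use X V Y XV in simp_all)
  moreover have "sqrt (1 - V^2) \<le> sqrt (1 - z powr k)"
  proof -
    have "z powr p \<le> V" unfolding V_def using z v p by (intro powr_mono2) auto
    then have "(z powr p)^2 \<le> V^2" by (intro power_mono) simp_all
    then show ?thesis by (simp add: sq_powr)
  qed
  moreover have "X^2 = x powr k" "Y^2 = y powr k" by (simp_all add: X_def Y_def sq_powr)
  ultimately show ?thesis by linarith
qed

lemma gram_triple_powr_difference_le: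
  fixes k :: real
  assumes gram: "gram_triple x y z" and k: "k \<ge> 2"
  shows "\<bar>x powr k - y powr k\<bar> \<le> sqrt (1 - z powr k)"
proof -
  have xy: "0 \<le> x" "0 \<le> y" using gram by (auto simp: gram_triple_def)
  show ?thesis
  proof (cases "y \<le> x")
    case True
    then have "y powr k \<le> x powr k" using xy k by (intro powr_mono2) auto
    then show ?thesis
      using gram_triple_ordered_powr_difference_le[OF gram True k] by simp
  next
    case False
    then have "x powr k \<le> y powr k" using xy k by (intro powr_mono2) auto
    then show ?thesis
      using gram_triple_ordered_powr_difference_le[OF gram_triple_swap[OF gram] _ k] False
      by simp
  qed
qed

section \<open>Positive semidefinite matrices with unit diagonal\<close>

lemma Bmat_quadratic_form:
  "(vector [p, q, r] :: real^3) \<bullet> (Bmat a b c *v vector [p, q, r]) =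
     p^2 + q^2 + r^2 + 2*a*p*q + 2*b*p*r + 2*c*q*r"
  unfolding Bmat_def inner_vec_def matrix_vector_mult_def
  by (simp add: sum_3 power2_eq_square algebra_simps)

text \<open>Testing the form on (1, \<plusminus>1, 0) etc. bounds the entries; testing it
  on a row of the adjugate gives (1 - c^2) det \<ge> 0 (and similarly for a, b), so
  det \<ge> 0 unless all entries have modulus 1.\<close>
lemma psd_Bmat_gram_triple:
  assumes "psd_matrix (Bmat a b c)"
  shows "gram_triple (\<bar>a\<bar>) (\<bar>b\<bar>) (\<bar>c\<bar>)"
proof -
  have Q: "\<And>p q r. 0 \<le> p^2 + q^2 + r^2 + 2*a*p*q + 2*b*p*r + 2*c*q*r"
    using assms unfolding psd_matrix_def by (metis Bmat_quadratic_form)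
  have a1: "\<bar>a\<bar> \<le> 1" using Q[of 1 1 0] Q[of 1 "-1" 0] by simp
  have b1: "\<bar>b\<bar> \<le> 1" using Q[of 1 0 1] Q[of 1 0 "-1"] by simp
  have c1: "\<bar>c\<bar> \<le> 1" using Q[of 0 1 1] Q[of 0 1 "-1"] by simp
  define D where "D = 1 - a^2 - b^2 - c^2 + 2*a*b*c"
  have Dc: "0 \<le> (1 - c^2) * D"
  proof -
    have "(1 - c^2) * D = (1-c^2)^2 + (b*c-a)^2 + (a*c-b)^2 + 2*a*(1-c^2)*(b*c-a) + 2*b*(1-c^2)*(a*c-b) + 2*c*(b*c-a)*(a*c-b)"
      unfolding D_def by algebra
    then show ?thesis using Q[of "1-c^2" "b*c-a" "a*c-b"] by simp
  qed
  have Db: "0 \<le> (1 - b^2) * D"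
  proof -
    have "(1 - b^2) * D = (b*c-a)^2 + (1-b^2)^2 + (a*b-c)^2 + 2*a*(b*c-a)*(1-b^2) + 2*b*(b*c-a)*(a*b-c) + 2*c*(1-b^2)*(a*b-c)"
      unfolding D_def by algebra
    then show ?thesis using Q[of "b*c-a" "1-b^2" "a*b-c"] by simp
  qed
  have Da: "0 \<le> (1 - a^2) * D"
  proof -
    have "(1 - a^2) * D = (a*c-b)^2 + (a*b-c)^2 + (1-a^2)^2 + 2*a*(a*c-b)*(a*b-c) + 2*b*(a*c-b)*(1-a^2) + 2*c*(a*b-c)*(1-a^2)"
      unfolding D_def by algebra
    then show ?thesis using Q[of "a*c-b" "a*b-c" "1-a^2"] by simp
  qed
  have "0 \<le> D \<or> (1 \<le> a^2 \<and> 1 \<le> b^2 \<and> 1 \<le> c^2)"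
  proof (cases "0 \<le> D")
    case False
    then have "D < 0" by simp
    then have "t \<le> 0" if "0 \<le> t * D" for t
      using that mult_pos_neg[of t D] by (cases "t \<le> 0") auto
    from this[OF Dc] this[OF Db] this[OF Da] show ?thesis by simp
  qed simp
  then have "\<bar>a\<bar>^2 + \<bar>b\<bar>^2 + \<bar>c\<bar>^2 \<le> 1 + 2*\<bar>a\<bar>*\<bar>b\<bar>*\<bar>c\<bar>"
  proof
    assume "0 \<le> D"
    moreover have "a*b*c \<le> \<bar>a\<bar>*\<bar>b\<bar>*\<bar>c\<bar>" by (metis abs_ge_self abs_mult)
    ultimately show ?thesis unfolding D_def power2_abs by linarith
  next
    assume "1 \<le> a^2 \<and> 1 \<le> b^2 \<and> 1 \<le> c^2"
    moreover have "a^2 \<le> 1" "b^2 \<le> 1" "c^2 \<le> 1"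
      using a1 b1 c1 by (simp_all add: abs_square_le_1)
    ultimately have "a^2 = 1" "b^2 = 1" "c^2 = 1" by simp_all
    then have "\<bar>a\<bar> = 1" "\<bar>b\<bar> = 1" "\<bar>c\<bar> = 1" by (simp_all add: abs_square_eq_1)
    then show ?thesis by simp
  qed
  with a1 b1 c1 show ?thesis by (simp add: gram_triple_def)
qed

lemma sqrt_one_minus_sq_le: "sqrt (1 - t^2) \<le> sqrt 2 * sqrt (1 - t)" for t :: real
proof -
  have "sqrt (1 - t^2) \<le> sqrt (2 * (1 - t))"
    using zero_le_power2[of "1 - t"] by (intro real_sqrt_le_mono) (simp add: power2_eq_square algebra_simps)
  also have "\<dots> = sqrt 2 * sqrt (1 - t)" by (rule real_sqrt_mult)
  finally show ?thesis .
qed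

section \<open>The angle version\<close>

lemma cos_gram_triple:
  assumes "0 \<le> \<alpha>" "\<alpha> \<le> pi/2" "0 \<le> \<beta>" "\<beta> \<le> pi/2"
  shows "gram_triple (cos \<alpha>) (cos \<beta>) (cos (\<alpha> - \<beta>))"
proof -
  have "cos (\<alpha> - \<beta>) = cos \<alpha> * cos \<beta> + sin \<alpha> * sin \<beta>" by (simp add: cos_diff)
  then have "(cos \<alpha>)^2 + (cos \<beta>)^2 + (cos (\<alpha> - \<beta>))^2 = 1 + 2 * cos \<alpha> * cos \<beta> * cos (\<alpha> - \<beta>)"
    using sin_squared_eq[of \<alpha>] sin_squared_eq[of \<beta>] by algebra
  moreover have "0 \<le> cos \<alpha>" "0 \<le> cos \<beta>" "0 \<le> cos (\<alpha> - \<beta>)"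
    using assms by (auto intro!: cos_ge_zero)
  ultimately show ?thesis by (simp add: gram_triple_def)
qed

text \<open>Since |\<alpha> - \<beta>| \<le> \<gamma> \<le> \<pi>/2 and sin is increasing on [0, \<pi>/2].\<close>
lemma abs_sin_diff_le:
  assumes "0 \<le> \<alpha>" "\<alpha> \<le> pi/2" "0 \<le> \<beta>" "\<beta> \<le> pi/2" "\<bar>\<alpha> - \<beta>\<bar> \<le> \<gamma>" "\<gamma> \<le> pi/2"
  shows "\<bar>sin (\<alpha> - \<beta>)\<bar> \<le> sin \<gamma>"
proof -
  have "\<bar>sin (\<alpha> - \<beta>)\<bar> = sin \<bar>\<alpha> - \<beta>\<bar>"
  proof (cases "\<beta> \<le> \<alpha>")
    case True
    then show ?thesis using assms by (simp add: sin_ge_zero)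
  next
    case False
    then have "0 \<le> sin (\<beta> - \<alpha>)" using assms by (intro sin_ge_zero) auto
    moreover have "sin (\<alpha> - \<beta>) = - sin (\<beta> - \<alpha>)" by (metis minus_diff_eq sin_minus)
    ultimately show ?thesis using False by simp
  qed
  also have "\<dots> \<le> sin \<gamma>" using assms by (intro sin_monotone_2pi_le) auto
  finally show ?thesis .
qed

text \<open>Part (ii): |cos^k \<alpha> - cos^k \<beta>| \<le> sqrt (1 - cos^k (\<alpha> - \<beta>)) and Bernoulli's
  inequality 1 - z^k \<le> k (1 - z) \<le> k (1 - z^2) give the factor sqrt k.\<close>
lemma cos_power_difference_le:
  fixes k :: nat
  assumes angles: "0 \<le> \<alpha>" "\<alpha> \<le> pi/2" "0 \<le> \<beta>" "\<beta> \<le> pi/2"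
    and \<gamma>: "\<bar>\<alpha> - \<beta>\<bar> \<le> \<gamma>" "\<gamma> \<le> pi/2" and k: "k \<ge> 1"
  shows "\<bar>cos \<alpha> ^ k - cos \<beta> ^ k\<bar> \<le> sqrt (real k) * sin \<gamma>"
proof -
  define z where "z = cos (\<alpha> - \<beta>)"
  have gram: "gram_triple (cos \<alpha>) (cos \<beta>) z"
    unfolding z_def using cos_gram_triple[OF angles] .
  then have z: "0 \<le> z" "z \<le> 1" by (auto simp: gram_triple_def)
  have "\<bar>cos \<alpha> ^ k - cos \<beta> ^ k\<bar> \<le> sqrt (real k * (1 - z^2))"
  proof (cases "k = 1")
    case True
    then show ?thesis using gram_triple_difference_le[OF gram] by simp
  next
    case False
    then have "real k \<ge> 2" using k by simp
    then have "\<bar>cos \<alpha> powr k - cos \<beta> powr k\<bar> \<le> sqrt (1 - z powr k)"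
      by (rule gram_triple_powr_difference_le[OF gram])
    then have "\<bar>cos \<alpha> ^ k - cos \<beta> ^ k\<bar> \<le> sqrt (1 - z ^ k)"
      using gram k by (simp add: gram_triple_def powr_realpow')
    also have "\<dots> \<le> sqrt (real k * (1 - z^2))"
    proof (rule real_sqrt_le_mono)
      have "1 + real k * (z - 1) \<le> (1 + (z - 1)) ^ k"
        using z by (intro Bernoulli_inequality) simp
      then have "1 - z ^ k \<le> real k * (1 - z)" by (simp add: algebra_simps)
      also have "\<dots> \<le> real k * (1 - z^2)"
        using z by (intro mult_left_mono) (auto simp: power2_eq_square mult_left_le)
      finally show "1 - z ^ k \<le> real k * (1 - z^2)" .
    qed
    finally show ?thesis .
  qed
  also have "\<dots> = sqrt (real k) * \<bar>sin (\<alpha> - \<beta>)\<bar>"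
    by (simp add: z_def real_sqrt_mult cos_squared_eq)
  also have "\<dots> \<le> sqrt (real k) * sin \<gamma>"
    using abs_sin_diff_le[OF angles \<gamma>] by (simp add: mult_left_mono)
  finally show ?thesis .
qed

theorem corollary4:
  shows "(\<forall>a b c :: real. psd_matrix (Bmat a b c) \<longrightarrow>
            \<bar>\<bar>a\<bar> - \<bar>b\<bar>\<bar> \<le> sqrt (1 - \<bar>c\<bar>^2)
          \<and> sqrt (1 - \<bar>c\<bar>^2) \<le> sqrt 2 * sqrt (1 - \<bar>c\<bar>)
          \<and> (\<forall>k::real. k \<ge> 2 \<longrightarrow>
               \<bar>\<bar>a\<bar> powr k - \<bar>b\<bar> powr k\<bar> \<le> sqrt (1 - \<bar>c\<bar> powr k)))
       \<and> (\<forall>\<alpha> \<beta> \<gamma> :: real. 0 \<le> \<alpha> \<and> \<alpha> \<le> pi/2 \<and> 0 \<le> \<beta> \<and> \<beta> \<le> pi/2 \<and> 0 \<le> \<gamma> \<and> \<gamma> \<le> pi/2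
            \<and> \<bar>\<alpha> - \<beta>\<bar> \<le> \<gamma> \<and> \<gamma> \<le> \<alpha> + \<beta> \<longrightarrow>
            (\<forall>k::nat. k \<ge> 1 \<longrightarrow> \<bar>cos \<alpha> ^ k - cos \<beta> ^ k\<bar> \<le> sqrt (real k) * sin \<gamma>))"
proof (intro conjI allI impI)
  fix a b c :: real
  assume "psd_matrix (Bmat a b c)"
  then have gram: "gram_triple (\<bar>a\<bar>) (\<bar>b\<bar>) (\<bar>c\<bar>)" by (rule psd_Bmat_gram_triple)
  show "\<bar>\<bar>a\<bar> - \<bar>b\<bar>\<bar> \<le> sqrt (1 - \<bar>c\<bar>^2)" using gram by (rule gram_triple_difference_le)
  show "sqrt (1 - \<bar>c\<bar>^2) \<le> sqrt 2 * sqrt (1 - \<bar>c\<bar>)" by (rule sqrt_one_minus_sq_le)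
  show "\<bar>\<bar>a\<bar> powr k - \<bar>b\<bar> powr k\<bar> \<le> sqrt (1 - \<bar>c\<bar> powr k)" if "k \<ge> 2" for k :: real
    using gram that by (rule gram_triple_powr_difference_le)
qed (elim conjE, rule cos_power_difference_le; assumption)

end
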